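(* Let $F$ be a finite-dimensional subspace of $c_0$. Then there exists $k\in\mathbb N$ such that $F$ has property-$(k-U)$ in $c_0$.
   Context: $c_0$ carries the sup norm. For a closed subspace $Y$ of $X$ and $y^*\in Y^*$, $HB(y^* )=\{x^*\in X^*:x^*|_Y=y^*,\ \|x^*\|=\|y^*\|\}$; for a set $A$ and $a\in A$, $\dim A=\dim\operatorname{span}(A-a)$. $Y$ has property-$(k-U)$ in $X$ if $\dim HB(y^* )\le k-1$ for all $y^*\in S_{Y^*}$. *)

theory Defs
  imports "HOL-Analysis.Analysis"
begin

typedef c0 = "{f :: nat \<Rightarrow>\<^sub>C real. (\<lambda>n. apply_bcontfun f n) \<longlonglongrightarrow> 0}"
  morphisms Rep_c0 Abs_c0
  by (rule exI[of _ 0]) simp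

setup_lifting type_definition_c0

instantiation c0 :: real_vector
begin
lift_definition zero_c0 :: c0 is "0" by simp
lift_definition plus_c0 :: "c0 \<Rightarrow> c0 \<Rightarrow> c0" is "(+)"
  by (simp add: tendsto_add_zero)
lift_definition minus_c0 :: "c0 \<Rightarrow> c0 \<Rightarrow> c0" is "(-)"
  by (simp add: tendsto_diff[where a=0 and b=0, simplified])
lift_definition uminus_c0 :: "c0 \<Rightarrow> c0" is "uminus"
  by (simp add: tendsto_minus[where a=0, simplified])
lift_definition scaleR_c0 :: "real \<Rightarrow> c0 \<Rightarrow> c0" is "scaleR"
  by (simp add: tendsto_mult_right_zero)
instance
  by standard (transfer; simp add: algebra_simps scaleR_add_right scaleR_add_left)+
end

instantiation c0 :: real_normed_vector
begin
lift_definition norm_c0 :: "c0 \<Rightarrow> real" is "norm" .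
definition dist_c0 :: "c0 \<Rightarrow> c0 \<Rightarrow> real" where "dist_c0 x y = norm (x - y)"
definition sgn_c0 :: "c0 \<Rightarrow> c0" where "sgn_c0 x = x /\<^sub>R norm x"
definition uniformity_c0 :: "(c0 \<times> c0) filter"
  where "uniformity_c0 = (INF e\<in>{0<..}. principal {(x, y). dist x y < e})"
definition open_c0 :: "c0 set \<Rightarrow> bool"
  where "open_c0 U = (\<forall>x\<in>U. \<forall>\<^sub>F (x', y) in uniformity. x' = x \<longrightarrow> y \<in> U)"
instance
proof
  fix x y :: c0 and a :: real and U :: "c0 set"
  show "dist x y = norm (x - y)" by (simp add: dist_c0_def)
  show "sgn x = x /\<^sub>R norm x" by (simp add: sgn_c0_def)
  show "(uniformity :: (c0 \<times> c0) filter) = (INF e\<in>{0<..}. principal {(x, y). dist x y < e})"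
    by (simp add: uniformity_c0_def)
  show "open U = (\<forall>x\<in>U. \<forall>\<^sub>F (x', y) in uniformity. x' = x \<longrightarrow> y \<in> U)"
    by (simp add: open_c0_def)
  show "(norm x = 0) = (x = 0)" by transfer simp
  show "norm (x + y) \<le> norm x + norm y" by transfer (rule norm_triangle_ineq)
  show "norm (a *\<^sub>R x) = \<bar>a\<bar> * norm x" by transfer simp
qed
end

definition fnorm_on :: "c0 set \<Rightarrow> (c0 \<Rightarrow> real) \<Rightarrow> real" where
  "fnorm_on Y g = Sup {\<bar>g y\<bar> | y. y \<in> Y \<and> norm y \<le> 1}"

definition in_dual_on :: "c0 set \<Rightarrow> (c0 \<Rightarrow> real) \<Rightarrow> bool" where
  "in_dual_on Y g \<longleftrightarrow>
     (\<forall>x\<in>Y. \<forall>y\<in>Y. g (x + y) = g x + g y) \<and>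
     (\<forall>c. \<forall>x\<in>Y. g (c *\<^sub>R x) = c * g x) \<and>
     (\<exists>K. \<forall>x\<in>Y. \<bar>g x\<bar> \<le> K * norm x)"

definition dual_sphere :: "c0 set \<Rightarrow> (c0 \<Rightarrow> real) set" where
  "dual_sphere Y = {g. in_dual_on Y g \<and> fnorm_on Y g = 1}"

definition HB :: "c0 set \<Rightarrow> (c0 \<Rightarrow> real) \<Rightarrow> (c0 \<Rightarrow>\<^sub>L real) set" where
  "HB Y g = {x. (\<forall>y\<in>Y. blinfun_apply x y = g y) \<and> norm x = fnorm_on Y g}"

text \<open>dim A \<le> m, where dim A = dim span (A - a) for a \<in> A (possibly infinite).\<close>
definition set_dim_le :: "'a::real_vector set \<Rightarrow> nat \<Rightarrow> bool" where
  "set_dim_le A m \<longleftrightarrow> (\<forall>a\<in>A.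
      (\<exists>B. finite B \<and> span B = span ((\<lambda>x. x - a) ` A)) \<and>
      dim (span ((\<lambda>x. x - a) ` A)) \<le> m)"

definition property_kU :: "nat \<Rightarrow> c0 set \<Rightarrow> bool" where
  "property_kU k Y \<longleftrightarrow> (\<forall>g\<in>dual_sphere Y. set_dim_le (HB Y g) (k - 1))"

end

theory Submission
  imports Defs
begin

(* Every finite-dimensional subspace F of c_0 is uniformly small far out: there is N with
   |y n| <= norm y / 2 for all y in F and n >= N.  Indeed, finite-dimensional subspaces are closed,
   so coefficients with respect to a basis are controlled by the norm, and the pointwise decay of
   the basis vectors becomes uniform on their span.  A norm-preserving extension x of a norm-one
   functional g on F then vanishes on every vector supported in [N, oo): otherwise adding half of
   a suitably signed unit vector of this kind to an almost-norming element of F gives a vector of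
   norm at most 1 on which x exceeds 1.  So x is a combination of the first N coordinate
   functionals, every HB(g) lies in an N-dimensional space, and F has property-((N+1)-U). *)

lemma closed_subspace_coeff_bound:
  fixes S :: "'a::real_normed_vector set"
  assumes "closed S" "subspace S" "a \<notin> S"
  obtains d where "d > 0" "\<And>y t. y - t *\<^sub>R a \<in> S \<Longrightarrow> \<bar>t\<bar> * d \<le> norm y"
proof
  have "S \<noteq> {}" using \<open>subspace S\<close> subspace_0 by blast
  then show "infdist a S > 0"
    using assms(1,3) infdist_pos_not_in_closed by blast
next
  fix y t assume yt: "y - t *\<^sub>R a \<in> S"
  show "\<bar>t\<bar> * infdist a S \<le> norm y"
  proof (cases "t = 0")
    case False
    have "a - y /\<^sub>R t = - (y - t *\<^sub>R a) /\<^sub>R t"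
      using False by (simp add: algebra_simps)
    also have "\<dots> \<in> S"
      by (rule subspace_scale[OF assms(2) subspace_neg[OF assms(2) yt]])
    finally have "infdist a S \<le> norm y / \<bar>t\<bar>"
      using infdist_le[of "a - y /\<^sub>R t" S a] by (simp add: dist_norm divide_inverse_commute)
    then show ?thesis
      using False by (simp add: field_simps mult.commute)
  qed simp
qed

lemma closed_span_insert:
  fixes S :: "'a::real_normed_vector set"
  assumes "closed (span S)"
  shows "closed (span (insert a S))"
proof (cases "a \<in> span S")
  case True
  then show ?thesis using assms by (simp add: span_redundant)
next
  case False
  obtain d where d: "d > 0" "\<And>y t. y - t *\<^sub>R a \<in> span S \<Longrightarrow> \<bar>t\<bar> * d \<le> norm y"
    using closed_subspace_coeff_bound[OF assms subspace_span False] by blast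
  show ?thesis
    unfolding closed_sequential_limits
  proof (intro allI impI, elim conjE)
    fix x l assume x: "\<forall>n. x n \<in> span (insert a S)" and "x \<longlonglongrightarrow> l"
    obtain t where t: "\<And>n. x n - t n *\<^sub>R a \<in> span S"
      using x unfolding span_breakdown_eq by metis
    have "Cauchy t"
    proof (rule metric_CauchyI)
      fix e :: real assume "e > 0"
      then obtain M where M: "\<And>m n. m \<ge> M \<Longrightarrow> n \<ge> M \<Longrightarrow> dist (x m) (x n) < e * d"
        using LIMSEQ_imp_Cauchy[OF \<open>x \<longlonglongrightarrow> l\<close>] d(1) unfolding Cauchy_def
        by (meson mult_pos_pos)
      have "dist (t m) (t n) < e" if "m \<ge> M" "n \<ge> M" for m n
      proof -
        have "(x m - x n) - (t m - t n) *\<^sub>R a = (x m - t m *\<^sub>R a) - (x n - t n *\<^sub>R a)"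
          by (simp add: algebra_simps)
        then have "\<bar>t m - t n\<bar> * d \<le> dist (x m) (x n)"
          using d(2) t span_diff by (metis dist_norm)
        then have "\<bar>t m - t n\<bar> * d < e * d"
          using M[OF that] by linarith
        then show ?thesis
          using d(1) by (simp add: dist_real_def)
      qed
      then show "\<exists>M. \<forall>m\<ge>M. \<forall>n\<ge>M. dist (t m) (t n) < e" by blast
    qed
    then obtain s where "t \<longlonglongrightarrow> s"
      using Cauchy_convergent_iff convergent_def by blast
    then have "(\<lambda>n. x n - t n *\<^sub>R a) \<longlonglongrightarrow> l - s *\<^sub>R a"
      by (intro tendsto_intros \<open>x \<longlonglongrightarrow> l\<close>)
    then have "l - s *\<^sub>R a \<in> span S"
      by (rule closed_sequentially[OF assms t])
    then show "l \<in> span (insert a S)"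
      unfolding span_breakdown_eq by blast
  qed
qed

lemma closed_span_finite:
  fixes B :: "'a::real_normed_vector set"
  assumes "finite B"
  shows "closed (span B)"
  using assms by (induction B rule: finite_induct) (simp_all add: closed_span_insert)

definition uniform_decay_on :: "(nat \<Rightarrow> 'a::real_normed_vector \<Rightarrow> real) \<Rightarrow> 'a set \<Rightarrow> bool" where
  "uniform_decay_on f S \<longleftrightarrow> (\<forall>e>0. \<exists>N. \<forall>y\<in>S. \<forall>n\<ge>N. \<bar>f n y\<bar> \<le> e * norm y)"

lemma uniform_decay_on_span_insert:
  fixes f :: "nat \<Rightarrow> 'a::real_normed_vector \<Rightarrow> real"
  assumes lin: "\<And>n. linear (f n)" and "closed (span B)"
    and decay: "uniform_decay_on f (span B)" and lim: "(\<lambda>n. f n a) \<longlonglongrightarrow> 0"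
  shows "uniform_decay_on f (span (insert a B))"
proof (cases "a \<in> span B")
  case True
  then show ?thesis using decay by (simp add: span_redundant)
next
  case False
  obtain d where d: "d > 0" "\<And>y t. y - t *\<^sub>R a \<in> span B \<Longrightarrow> \<bar>t\<bar> * d \<le> norm y"
    using closed_subspace_coeff_bound[OF assms(2) subspace_span False] by blast
  define M where "M = 1 + norm a / d"
  have "M \<ge> 1" using d(1) by (simp add: M_def)
  show ?thesis
    unfolding uniform_decay_on_def
  proof (intro allI impI)
    fix e :: real assume "e > 0"
    then have "e / (2*M) > 0" using \<open>M \<ge> 1\<close> by simp
    then obtain N1 where N1: "\<And>w n. w \<in> span B \<Longrightarrow> n \<ge> N1 \<Longrightarrow> \<bar>f n w\<bar> \<le> e / (2*M) * norm w"
      using decay unfolding uniform_decay_on_def by blast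
    have "e * d / 2 > 0" using \<open>e > 0\<close> d(1) by simp
    then obtain N2 where N2: "\<And>n. n \<ge> N2 \<Longrightarrow> \<bar>f n a\<bar> < e * d / 2"
      using lim unfolding LIMSEQ_def dist_real_def by fastforce
    have "\<bar>f n y\<bar> \<le> e * norm y" if y: "y \<in> span (insert a B)" and n: "n \<ge> max N1 N2" for y n
    proof -
      obtain t where w: "y - t *\<^sub>R a \<in> span B"
        using y unfolding span_breakdown_eq by blast
      define w where "w = y - t *\<^sub>R a"
      have t: "\<bar>t\<bar> \<le> norm y / d"
        using d(2)[OF w] d(1) by (simp add: pos_le_divide_eq)
      have "norm w \<le> norm y + \<bar>t\<bar> * norm a"
        unfolding w_def using norm_triangle_ineq4[of y "t *\<^sub>R a"] by simp
      also have "\<dots> \<le> M * norm y"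
        using mult_right_mono[OF t, of "norm a"] d(1) by (simp add: M_def algebra_simps)
      finally have "\<bar>f n w\<bar> \<le> e / (2*M) * (M * norm y)"
        using N1[of w n] w n \<open>e / (2*M) > 0\<close> unfolding w_def
        by (meson max.boundedE mult_left_mono order_trans less_imp_le)
      also have "\<dots> = e / 2 * norm y"
        using \<open>M \<ge> 1\<close> by simp
      finally have fw: "\<bar>f n w\<bar> \<le> e / 2 * norm y" .
      have "\<bar>t\<bar> * \<bar>f n a\<bar> \<le> norm y / d * (e * d / 2)"
        using N2[of n] n t by (intro mult_mono) simp_all
      also have "\<dots> = e / 2 * norm y"
        using d(1) by simp
      finally have ta: "\<bar>t\<bar> * \<bar>f n a\<bar> \<le> e / 2 * norm y" .
      have "f n y = f n w + t * f n a"
        using linear_diff[OF lin] linear_scale[OF lin] by (simp add: w_def)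
      then have "\<bar>f n y\<bar> \<le> \<bar>f n w\<bar> + \<bar>t\<bar> * \<bar>f n a\<bar>"
        using abs_triangle_ineq[of "f n w" "t * f n a"] by (simp add: abs_mult)
      then show ?thesis
        using fw ta by linarith
    qed
    then show "\<exists>N. \<forall>y\<in>span (insert a B). \<forall>n\<ge>N. \<bar>f n y\<bar> \<le> e * norm y" by blast
  qed
qed

lemma uniform_decay_on_finite_span:
  fixes f :: "nat \<Rightarrow> 'a::real_normed_vector \<Rightarrow> real"
  assumes "\<And>n. linear (f n)" and "finite B" and "\<And>b. b \<in> B \<Longrightarrow> (\<lambda>n. f n b) \<longlonglongrightarrow> 0"
  shows "uniform_decay_on f (span B)"
  using assms(2,3)
proof (induction B rule: finite_induct)
  case empty
  then show ?case
    using linear_0[OF assms(1)] by (simp add: uniform_decay_on_def)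
next
  case (insert a B)
  then show ?case
    using uniform_decay_on_span_insert[OF assms(1) closed_span_finite] by simp
qed

definition c0_coord :: "c0 \<Rightarrow> nat \<Rightarrow> real" where
  "c0_coord x n = apply_bcontfun (Rep_c0 x) n"

lemma c0_coord_add [simp]: "c0_coord (x + y) n = c0_coord x n + c0_coord y n"
  by (simp add: c0_coord_def plus_c0.rep_eq)

lemma c0_coord_diff [simp]: "c0_coord (x - y) n = c0_coord x n - c0_coord y n"
  by (simp add: c0_coord_def minus_c0.rep_eq)

lemma c0_coord_scaleR [simp]: "c0_coord (c *\<^sub>R x) n = c * c0_coord x n"
  by (simp add: c0_coord_def scaleR_c0.rep_eq)

lemma abs_c0_coord_le_norm: "\<bar>c0_coord x n\<bar> \<le> norm x"
  using norm_bounded[of "Rep_c0 x" n] by (simp add: c0_coord_def norm_c0.rep_eq)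

lemma norm_c0_le: "(\<And>n. \<bar>c0_coord x n\<bar> \<le> b) \<Longrightarrow> norm x \<le> b"
  using norm_bound[of "Rep_c0 x" b] by (simp add: c0_coord_def norm_c0.rep_eq)

lemma c0_coord_tendsto_zero: "(\<lambda>n. c0_coord x n) \<longlonglongrightarrow> 0"
  using Rep_c0[of x] by (simp add: c0_coord_def)

lemma bounded_linear_c0_coord: "bounded_linear (\<lambda>x. c0_coord x n)"
  by (rule bounded_linear_intro[where K = 1]) (auto simp: abs_c0_coord_le_norm)

lemma c0_coord_sum: "c0_coord (sum f S) n = (\<Sum>i\<in>S. c0_coord (f i) n)"
  using linear_sum[OF bounded_linear.linear[OF bounded_linear_c0_coord]] .

definition c0_unit :: "nat \<Rightarrow> c0" where
  "c0_unit k = Abs_c0 (Bcontfun (\<lambda>m. if m = k then 1 else 0))"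

lemma c0_coord_c0_unit: "c0_coord (c0_unit k) n = (if n = k then 1 else 0)"
proof -
  have bounded: "(\<lambda>m::nat. if m = k then 1 else (0::real)) \<in> bcontfun"
    by (rule bcontfun_normI[where b = 1]) auto
  have "(\<lambda>m::nat. if m = k then 1 else (0::real)) \<longlonglongrightarrow> 0"
    by (rule tendsto_eventually) (auto simp: eventually_sequentially intro!: exI[of _ "Suc k"])
  then have "Bcontfun (\<lambda>m. if m = k then 1 else 0) \<in> {f :: nat \<Rightarrow>\<^sub>C real. f \<longlonglongrightarrow> 0}"
    using bounded by (simp add: Bcontfun_inverse)
  then show ?thesis
    using bounded by (simp add: c0_unit_def c0_coord_def Abs_c0_inverse Bcontfun_inverse)
qed

definition c0_eval :: "nat \<Rightarrow> c0 \<Rightarrow>\<^sub>L real" where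
  "c0_eval n = Blinfun (\<lambda>x. c0_coord x n)"

lemma c0_eval_apply [simp]: "blinfun_apply (c0_eval n) x = c0_coord x n"
  by (simp add: c0_eval_def bounded_linear_Blinfun_apply[OF bounded_linear_c0_coord])

lemma c0_uniform_decay_on_finite_span:
  assumes "finite B"
  shows "uniform_decay_on (\<lambda>n x. c0_coord x n) (span B)"
  by (rule uniform_decay_on_finite_span[OF bounded_linear.linear[OF bounded_linear_c0_coord]
        assms c0_coord_tendsto_zero])

lemma fnorm_on_nearly_attained:
  assumes "subspace Y" "in_dual_on Y g" "\<epsilon> > 0"
  obtains y where "y \<in> Y" "norm y \<le> 1" "fnorm_on Y g - \<epsilon> < g y"
proof -
  define S where "S = {\<bar>g y\<bar> | y. y \<in> Y \<and> norm y \<le> 1}"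
  have "S \<noteq> {}"
    unfolding S_def using subspace_0[OF \<open>subspace Y\<close>] by force
  obtain K where K: "\<And>y. y \<in> Y \<Longrightarrow> \<bar>g y\<bar> \<le> K * norm y"
    using assms(2) unfolding in_dual_on_def by blast
  have "K * norm y \<le> \<bar>K\<bar>" if "norm y \<le> 1" for y
    using mult_right_mono[OF abs_ge_self[of K] norm_ge_zero[of y]]
      mult_left_mono[OF that abs_ge_zero[of K]] by simp
  then have "bdd_above S"
    using K by (fastforce simp: S_def intro: bdd_aboveI[where M = "\<bar>K\<bar>"])
  moreover have "fnorm_on Y g - \<epsilon> < Sup S"
    using \<open>\<epsilon> > 0\<close> by (simp add: fnorm_on_def S_def)
  ultimately obtain y0 where y0: "y0 \<in> Y" "norm y0 \<le> 1" "fnorm_on Y g - \<epsilon> < \<bar>g y0\<bar>"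
    using less_cSup_iff[OF \<open>S \<noteq> {}\<close>] by (auto simp: S_def)
  have "g (- y0) = - g y0"
    using assms(2) y0(1) unfolding in_dual_on_def by (metis scaleR_minus1_left mult_minus1)
  then show ?thesis
    using that[of y0] that[of "- y0"] y0 subspace_neg[OF \<open>subspace Y\<close>] by (cases "g y0 \<ge> 0") auto
qed

lemma HB_vanishes_on_tail:
  assumes "subspace F"
    and tail: "\<And>y n. y \<in> F \<Longrightarrow> n \<ge> N \<Longrightarrow> \<bar>c0_coord y n\<bar> \<le> 1/2 * norm y"
    and g: "g \<in> dual_sphere F" and x: "x \<in> HB F g"
    and z: "\<And>n. n < N \<Longrightarrow> c0_coord z n = 0"
  shows "blinfun_apply x z = 0"
proof (rule ccontr)
  assume xz: "blinfun_apply x z \<noteq> 0"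
  then have "norm z > 0" by auto
  have g1: "in_dual_on F g" "fnorm_on F g = 1"
    using g by (auto simp: dual_sphere_def)
  have xF: "\<And>y. y \<in> F \<Longrightarrow> blinfun_apply x y = g y" and "norm x = 1"
    using x g1 by (auto simp: HB_def)
  define w where "w = (sgn (blinfun_apply x z) / norm z) *\<^sub>R z"
  define c where "c = \<bar>blinfun_apply x z\<bar> / norm z"
  have "c > 0"
    using xz \<open>norm z > 0\<close> by (simp add: c_def)
  have xw: "blinfun_apply x w = c"
    by (simp add: w_def c_def blinfun.scaleR_right abs_sgn sgn_mult_abs mult.commute)
  have "norm w = 1"
    using xz \<open>norm z > 0\<close> by (simp add: w_def abs_sgn)
  obtain y where y: "y \<in> F" "norm y \<le> 1" "1 - c / 2 < g y"
    using fnorm_on_nearly_attained[OF assms(1) g1(1), of "c / 2"] \<open>c > 0\<close> g1(2) by auto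
  define v where "v = y + (1/2) *\<^sub>R w"
  have "norm v \<le> 1"
  proof (rule norm_c0_le)
    fix n
    have "\<bar>c0_coord w n\<bar> \<le> 1"
      using abs_c0_coord_le_norm[of w n] \<open>norm w = 1\<close> by simp
    moreover have "\<bar>c0_coord y n\<bar> \<le> 1"
      using abs_c0_coord_le_norm[of y n] y(2) by simp
    moreover have "n \<ge> N \<Longrightarrow> \<bar>c0_coord y n\<bar> \<le> 1/2"
      using tail[OF y(1), of n] y(2) by simp
    moreover have "n < N \<Longrightarrow> c0_coord w n = 0"
      using z by (simp add: w_def)
    ultimately show "\<bar>c0_coord v n\<bar> \<le> 1"
      by (cases "n < N") (auto simp: v_def)
  qed
  moreover have "blinfun_apply x v = g y + c / 2"
    using xF[OF y(1)] xw by (simp add: v_def blinfun.add_right blinfun.scaleR_right)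
  ultimately show False
    using norm_blinfun[of x v] \<open>norm x = 1\<close> y(3) by simp
qed

lemma blinfun_eq_sum_c0_eval:
  assumes "\<And>z. (\<And>n. n < N \<Longrightarrow> c0_coord z n = 0) \<Longrightarrow> blinfun_apply x z = 0"
  shows "x = (\<Sum>n<N. blinfun_apply x (c0_unit n) *\<^sub>R c0_eval n)"
proof (rule blinfun_eqI)
  fix u
  define h where "h = (\<Sum>n<N. c0_coord u n *\<^sub>R c0_unit n)"
  have "c0_coord h m = (if m < N then c0_coord u m else 0)" for m
    by (simp add: h_def c0_coord_sum c0_coord_c0_unit if_distrib[of "\<lambda>t. _ * t"] cong: if_cong)
  then have "blinfun_apply x (u - h) = 0"
    by (intro assms) simp
  then have "blinfun_apply x u = blinfun_apply x h"
    by (simp add: blinfun.diff_right)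
  also have "\<dots> = blinfun_apply (\<Sum>n<N. blinfun_apply x (c0_unit n) *\<^sub>R c0_eval n) u"
    by (simp add: h_def blinfun.sum_right blinfun.scaleR_right blinfun.sum_left
        blinfun.scaleR_left mult.commute)
  finally show "blinfun_apply x u = blinfun_apply (\<Sum>n<N. blinfun_apply x (c0_unit n) *\<^sub>R c0_eval n) u" .
qed

lemma set_dim_le_if_subset_span:
  fixes A P :: "'a::real_vector set"
  assumes "A \<subseteq> span P" "finite P" "card P \<le> m"
  shows "set_dim_le A m"
  unfolding set_dim_le_def
proof
  fix a assume "a \<in> A"
  define U where "U = span ((\<lambda>x. x - a) ` A)"
  have "(\<lambda>x. x - a) ` A \<subseteq> span P"
    using assms(1) \<open>a \<in> A\<close> span_diff by blast
  then have "U \<subseteq> span P"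
    unfolding U_def by (rule span_minimal) (rule subspace_span)
  obtain T where T: "T \<subseteq> U" "independent T" "U \<subseteq> span T"
    by (meson basis_exists)
  have "T \<subseteq> span P"
    using T(1) \<open>U \<subseteq> span P\<close> by (rule order_trans)
  then have "finite T"
    using independent_span_bound[OF assms(2) T(2)] by simp
  moreover have "span T = U"
    using span_subspace[OF T(1,3)] by (simp add: U_def)
  moreover have "dim U \<le> m"
    using dim_le_card[OF \<open>U \<subseteq> span P\<close> assms(2)] assms(3) by simp
  ultimately show "(\<exists>B. finite B \<and> span B = span ((\<lambda>x. x - a) ` A)) \<and>
      dim (span ((\<lambda>x. x - a) ` A)) \<le> m"
    unfolding U_def[symmetric] by blast
qed

theorem theorem4p14:
  fixes F :: "c0 set"
  assumes "subspace F"
    and "\<exists>B. finite B \<and> span B = F"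
  shows "\<exists>k::nat. k \<ge> 1 \<and> property_kU k F"
proof -
  obtain B where "finite B" "span B = F"
    using assms(2) by blast
  then obtain N where N: "\<And>y n. y \<in> F \<Longrightarrow> n \<ge> N \<Longrightarrow> \<bar>c0_coord y n\<bar> \<le> 1/2 * norm y"
    using c0_uniform_decay_on_finite_span[OF \<open>finite B\<close>] \<open>span B = F\<close>
    unfolding uniform_decay_on_def by (metis half_gt_zero zero_less_one)
  have HB_subset: "HB F g \<subseteq> span (c0_eval ` {..<N})" if g: "g \<in> dual_sphere F" for g
  proof
    fix x assume "x \<in> HB F g"
    then have "x = (\<Sum>n<N. blinfun_apply x (c0_unit n) *\<^sub>R c0_eval n)"
      by (intro blinfun_eq_sum_c0_eval HB_vanishes_on_tail[OF assms(1) N g])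
    also have "\<dots> \<in> span (c0_eval ` {..<N})"
      by (intro span_sum span_scale span_base) simp
    finally show "x \<in> span (c0_eval ` {..<N})" .
  qed
  have "property_kU (N + 1) F"
    unfolding property_kU_def
  proof
    fix g assume "g \<in> dual_sphere F"
    show "set_dim_le (HB F g) (N + 1 - 1)"
      using card_image_le[of "{..<N}" c0_eval]
      by (intro set_dim_le_if_subset_span[OF HB_subset[OF \<open>g \<in> dual_sphere F\<close>]]) simp_all
  qed
  then show ?thesis
    by (intro exI[of _ "N + 1"]) simp
qed

end
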